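(* Let $R\subseteq\mathbb N$ be sparse and $A$ an operator on $R$. If $A>_R0$ then there is $r\in\mathbb Q_{>1}$ such that $A(\sigma z)>r\,Az$ for all but finitely many $z\in R$; if $A<_R0$ then there is $r\in\mathbb Q_{>1}$ such that $A(\sigma z)<r\,Az$ for all but finitely many $z\in R$. In particular, if $A>_R0$ (resp. $A<_R0$) the map $z\mapsto Az$ on $R$ is eventually strictly increasing (resp. strictly decreasing).
   Context: Let $R\subseteq\mathbb N$ be infinite, enumerated increasingly as $(r_n)_{n\in\mathbb N}$; $\sigma:R\to R$ is the successor map $\sigma(r_n)=r_{n+1}$ and $\sigma^k$ its $k$-fold iterate ($\sigma^0=\mathrm{id}$). An operator on $R$ is a function $R\to\mathbb Z$, $z\mapsto a_m\sigma^m(z)+\dots+a_0\sigma^0(z)$ with $a_i\in\mathbb Z$. For an operator $A$: $A=_R0$ if $Az=0$ for all $z\in R$; $A>_R0$ (resp. $A<_R0$) if $Az>0$ (resp. $Az<0$) for all but finitely many $z\in R$. $R$ is sparse if every operator $A$ satisfies (S1) $A=_R0$ or $A>_R0$ or $A<_R0$; and (S2) if $A>_R0$ then there is $\Delta\in\mathbb N$ with $A(\sigma^\Delta z)>z$ for all $z\in R$. *)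

theory Defs
  imports Complex_Main "HOL-Library.Infinite_Set"
begin

text \<open>R is enumerated increasingly by enumerate R; sigma is the successor map
  sigma(r_n) = r_(n+1) (only meaningful on R).\<close>
definition sigma :: "nat set \<Rightarrow> nat \<Rightarrow> nat" where
  "sigma R z = enumerate R (Suc (the_inv_into UNIV (enumerate R) z))"

text \<open>An operator a_m sigma^m + ... + a_0 sigma^0 is given by its coefficient list
  [a_0, ..., a_m]; op_apply R a z is its value at z.\<close>
definition op_apply :: "nat set \<Rightarrow> int list \<Rightarrow> nat \<Rightarrow> int" where
  "op_apply R a z = (\<Sum>i<length a. a ! i * int ((sigma R ^^ i) z))"

definition op_zero :: "nat set \<Rightarrow> int list \<Rightarrow> bool" where
  "op_zero R a \<longleftrightarrow> (\<forall>z\<in>R. op_apply R a z = 0)"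

definition op_pos :: "nat set \<Rightarrow> int list \<Rightarrow> bool" where
  "op_pos R a \<longleftrightarrow> finite {z\<in>R. \<not> op_apply R a z > 0}"

definition op_neg :: "nat set \<Rightarrow> int list \<Rightarrow> bool" where
  "op_neg R a \<longleftrightarrow> finite {z\<in>R. \<not> op_apply R a z < 0}"

definition sparse :: "nat set \<Rightarrow> bool" where
  "sparse R \<longleftrightarrow> infinite R \<and>
     (\<forall>a. (op_zero R a \<or> op_pos R a \<or> op_neg R a) \<and>
          (op_pos R a \<longrightarrow> (\<exists>\<Delta>::nat. \<forall>z\<in>R. op_apply R a ((sigma R ^^ \<Delta>) z) > int z)))"

end

theory Submission
  imports Defs
begin

(* Write x n = A r_n. The difference sigma A - A cannot be eventually nonpositive, since then
   x would be eventually bounded while (S2) makes it unbounded; so sigma A - A >_R 0, and (S2)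
   applied to it together with the a priori bound A z <= M sigma^m z (M the sum of the |a_i|)
   gives x n < M (x (n+E+1) - x (n+E)) for all n. With K = M 2^E the operator K sigma A - (K+1) A
   cannot be <_R 0: then x would grow by a factor at most (1 + 1/K)^E <= 2^E over E steps,
   too little for the jump. Hence eventually K x (n+1) >= (K+1) x n, and r = (2K+1)/(2K) works.
   The case A <_R 0 follows by negating A, and monotonicity from r > 1. *)

lemma sparse_infinite: "sparse R \<Longrightarrow> infinite R"
  unfolding sparse_def by blast

lemma sigma_enumerate:
  assumes "infinite R"
  shows "sigma R (enumerate R n) = enumerate R (Suc n)"
  unfolding sigma_def using inj_enumerate[OF assms] by (simp add: the_inv_into_f_f)

lemma funpow_sigma_enumerate:
  assumes "infinite R"
  shows "(sigma R ^^ j) (enumerate R n) = enumerate R (n + j)"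
  by (induction j) (simp_all add: sigma_enumerate[OF assms])

lemma finite_exceptions_iff_eventually_enumerate:
  fixes R :: "nat set"
  assumes "infinite R"
  shows "finite {z\<in>R. \<not> P z} \<longleftrightarrow> (\<forall>\<^sub>F n in sequentially. P (enumerate R n))"
proof -
  have "{z\<in>R. \<not> P z} = enumerate R ` {n. \<not> P (enumerate R n)}"
    using range_enumerate[OF assms] by auto
  then have "finite {z\<in>R. \<not> P z} \<longleftrightarrow> finite {n. \<not> P (enumerate R n)}"
    using inj_enumerate[OF assms] by (simp add: finite_image_iff inj_on_subset)
  then show ?thesis
    by (simp add: eventually_cofinite flip: cofinite_eq_sequentially)
qed

definition op_seq :: "nat set \<Rightarrow> int list \<Rightarrow> nat \<Rightarrow> int" where
  "op_seq R a n = op_apply R a (enumerate R n)"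

lemma op_seq_eq_sum:
  assumes "infinite R"
  shows "op_seq R a n = (\<Sum>i<length a. a ! i * int (enumerate R (n + i)))"
  unfolding op_seq_def op_apply_def funpow_sigma_enumerate[OF assms] ..

lemma op_pos_iff_eventually:
  "infinite R \<Longrightarrow> op_pos R a \<longleftrightarrow> (\<forall>\<^sub>F n in sequentially. op_seq R a n > 0)"
  unfolding op_pos_def op_seq_def by (rule finite_exceptions_iff_eventually_enumerate)

lemma op_neg_iff_eventually:
  "infinite R \<Longrightarrow> op_neg R a \<longleftrightarrow> (\<forall>\<^sub>F n in sequentially. op_seq R a n < 0)"
  unfolding op_neg_def op_seq_def by (rule finite_exceptions_iff_eventually_enumerate)

lemma op_zero_imp_op_seq_eq_0:
  "infinite R \<Longrightarrow> op_zero R a \<Longrightarrow> op_seq R a n = 0"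
  unfolding op_zero_def op_seq_def by (simp add: enumerate_in_set)

lemma op_apply_map_uminus: "op_apply R (map uminus a) z = - op_apply R a z"
  unfolding op_apply_def by (simp add: sum_negf)

lemma op_neg_iff_op_pos_map_uminus: "op_neg R a \<longleftrightarrow> op_pos R (map uminus a)"
  unfolding op_neg_def op_pos_def op_apply_map_uminus by simp

definition op_shift_comb :: "int \<Rightarrow> int \<Rightarrow> int list \<Rightarrow> int list" where
  "op_shift_comb c d a = map2 (\<lambda>x y. c * x + d * y) (0 # a) (a @ [0])"

lemma op_apply_map2_lincomb:
  assumes "length a = length b"
  shows "op_apply R (map2 (\<lambda>x y. c * x + d * y) a b) z = c * op_apply R a z + d * op_apply R b z"
  unfolding op_apply_def using assms
  by (simp add: algebra_simps sum.distrib sum_distrib_left)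

lemma op_apply_append_0: "op_apply R (a @ [0]) z = op_apply R a z"
  unfolding op_apply_def by (simp add: nth_append)

lemma op_apply_Cons_0: "op_apply R (0 # a) z = op_apply R a (sigma R z)"
  unfolding op_apply_def length_Cons sum.lessThan_Suc_shift
  by (simp add: funpow_Suc_right del: funpow.simps)

lemma op_seq_shift_comb:
  assumes "infinite R"
  shows "op_seq R (op_shift_comb c d a) n = c * op_seq R a (Suc n) + d * op_seq R a n"
  unfolding op_seq_def op_shift_comb_def
  by (simp add: op_apply_map2_lincomb op_apply_append_0 op_apply_Cons_0 sigma_enumerate[OF assms])

lemma op_seq_le_norm_mult:
  assumes "infinite R"
  shows "op_seq R a n \<le> (\<Sum>i<length a. \<bar>a ! i\<bar>) * int (enumerate R (n + (length a - 1)))"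
proof -
  have "op_seq R a n \<le> (\<Sum>i<length a. \<bar>a ! i\<bar> * int (enumerate R (n + (length a - 1))))"
    unfolding op_seq_eq_sum[OF assms]
  proof (rule sum_mono)
    fix i assume "i \<in> {..<length a}"
    then have "enumerate R (n + i) \<le> enumerate R (n + (length a - 1))"
      using assms by simp
    then show "a ! i * int (enumerate R (n + i)) \<le> \<bar>a ! i\<bar> * int (enumerate R (n + (length a - 1)))"
      by (intro mult_mono) auto
  qed
  then show ?thesis by (simp add: sum_distrib_right)
qed

lemma sparse_not_op_pos_imp_eventually_nonpos:
  assumes "sparse R" "\<not> op_pos R a"
  shows "\<forall>\<^sub>F n in sequentially. op_seq R a n \<le> 0"
proof -
  have inf: "infinite R" using sparse_infinite[OF assms(1)] .
  have "op_zero R a \<or> op_neg R a" using assms unfolding sparse_def by blast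
  then show ?thesis
    by (auto simp: op_zero_imp_op_seq_eq_0[OF inf] op_neg_iff_eventually[OF inf] elim: eventually_mono)
qed

lemma sparse_not_op_neg_imp_eventually_nonneg:
  assumes "sparse R" "\<not> op_neg R a"
  shows "\<forall>\<^sub>F n in sequentially. op_seq R a n \<ge> 0"
proof -
  have inf: "infinite R" using sparse_infinite[OF assms(1)] .
  have "op_zero R a \<or> op_pos R a" using assms unfolding sparse_def by blast
  then show ?thesis
    by (auto simp: op_zero_imp_op_seq_eq_0[OF inf] op_pos_iff_eventually[OF inf] elim: eventually_mono)
qed

lemma sparse_op_pos_imp_unbounded:
  assumes "sparse R" "op_pos R a"
  obtains \<Delta> where "\<And>n. int (enumerate R n) < op_seq R a (n + \<Delta>)"
proof -
  have inf: "infinite R" using sparse_infinite[OF assms(1)] .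
  obtain \<Delta> where \<Delta>: "\<forall>z\<in>R. op_apply R a ((sigma R ^^ \<Delta>) z) > int z"
    using assms unfolding sparse_def by blast
  have "int (enumerate R n) < op_seq R a (n + \<Delta>)" for n
    using \<Delta>[rule_format, OF enumerate_in_set[OF inf, of n]]
    by (simp add: op_seq_def funpow_sigma_enumerate[OF inf])
  then show thesis by (rule that)
qed

lemma unbounded_imp_not_eventually_nonincreasing:
  fixes x :: "nat \<Rightarrow> int"
  assumes unbounded: "\<And>n. int n < x (n + \<Delta>)"
  shows "\<not> (\<forall>\<^sub>F n in sequentially. x (Suc n) \<le> x n)"
proof
  assume "\<forall>\<^sub>F n in sequentially. x (Suc n) \<le> x n"
  then obtain N where N: "\<And>n. N \<le> n \<Longrightarrow> x (Suc n) \<le> x n"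
    unfolding eventually_sequentially by blast
  have bounded: "x (N + j) \<le> x N" for j
  proof (induction j)
    case (Suc j)
    then show ?case using N[of "N + j"] by simp
  qed simp
  define n where "n = N + nat (x N)"
  have "x (n + \<Delta>) \<le> x N"
    using bounded[of "nat (x N) + \<Delta>"] by (simp add: n_def add.assoc)
  moreover have "x N \<le> int n" unfolding n_def by simp
  ultimately show False using unbounded[of n] by simp
qed

lemma eventually_Suc_less_imp_less:
  fixes x :: "nat \<Rightarrow> 'a::order"
  assumes "\<forall>\<^sub>F n in sequentially. x n < x (Suc n)"
  obtains N where "\<And>n n'. N \<le> n \<Longrightarrow> n < n' \<Longrightarrow> x n < x n'"
proof -
  obtain N where N: "\<And>n. N \<le> n \<Longrightarrow> x n < x (Suc n)"
    using assms unfolding eventually_sequentially by blast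
  have shifted: "x (N + k) < x (N + k')" if "k < k'" for k k'
    using lift_Suc_mono_less[of "\<lambda>k. x (N + k)", OF _ that] N by simp
  have "x n < x n'" if "N \<le> n" "n < n'" for n n'
    using that shifted[of "n - N" "n' - N"] by simp
  then show thesis by (rule that)
qed

lemma jump_imp_not_eventually_slow_growth:
  fixes x :: "nat \<Rightarrow> int" and M :: int
  assumes pos: "\<forall>\<^sub>F n in sequentially. 0 < x n" and "0 < M"
    and jump: "\<And>n. x n < M * (x (Suc (n + E)) - x (n + E))"
  shows "\<not> (\<forall>\<^sub>F n in sequentially. M * 2 ^ E * x (Suc n) < (M * 2 ^ E + 1) * x n)"
proof
  define K where "K = M * 2 ^ E"
  assume "\<forall>\<^sub>F n in sequentially. M * 2 ^ E * x (Suc n) < (M * 2 ^ E + 1) * x n"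
  with pos have "\<forall>\<^sub>F n in sequentially. 0 < x n \<and> K * x (Suc n) < (K + 1) * x n"
    unfolding K_def by (rule eventually_conj)
  then obtain N where N: "\<And>n. N \<le> n \<Longrightarrow> 0 < x n \<and> K * x (Suc n) < (K + 1) * x n"
    unfolding eventually_sequentially by blast
  have "0 < K" unfolding K_def using \<open>0 < M\<close> by simp
  have iter: "K ^ j * x (N + j) \<le> (K + 1) ^ j * x N" for j
  proof (induction j)
    case (Suc j)
    have "K ^ Suc j * x (N + Suc j) = K ^ j * (K * x (Suc (N + j)))" by simp
    also have "\<dots> \<le> K ^ j * ((K + 1) * x (N + j))"
      using N[of "N + j"] \<open>0 < K\<close> by (intro mult_left_mono) auto
    also have "\<dots> = (K + 1) * (K ^ j * x (N + j))" by (simp add: algebra_simps)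
    also have "\<dots> \<le> (K + 1) * ((K + 1) ^ j * x N)"
      using Suc \<open>0 < K\<close> by (intro mult_left_mono) auto
    finally show ?case by (simp add: algebra_simps)
  qed simp
  define D where "D = x (Suc (N + E)) - x (N + E)"
  have "K * D < x (N + E)" using N[of "N + E"] by (simp add: D_def algebra_simps)
  have "K ^ E * K * (M * D) = M * (K ^ E * (K * D))" by (simp add: algebra_simps)
  also have "\<dots> < M * (K ^ E * x (N + E))"
    using \<open>K * D < x (N + E)\<close> \<open>0 < K\<close> \<open>0 < M\<close> by simp
  also have "\<dots> \<le> M * ((K + 1) ^ E * x N)"
    using iter[of E] \<open>0 < M\<close> by simp
  also have "\<dots> \<le> M * ((2 * K) ^ E * x N)"
    using N[of N] \<open>0 < K\<close> \<open>0 < M\<close> by (intro mult_left_mono mult_right_mono power_mono) auto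
  also have "\<dots> = K ^ E * K * x N" by (simp add: K_def algebra_simps)
  finally have "K ^ E * K * (M * D) < K ^ E * K * x N" .
  moreover have "K ^ E * K * x N < K ^ E * K * (M * D)"
    using jump[of N] \<open>0 < K\<close> by (simp add: D_def)
  ultimately show False by simp
qed

lemma sparse_op_pos_imp_op_pos_difference:
  assumes "sparse R" "op_pos R a"
  shows "op_pos R (op_shift_comb 1 (-1) a)"
proof (rule ccontr)
  have inf: "infinite R" using sparse_infinite[OF assms(1)] .
  let ?x = "op_seq R a"
  assume "\<not> op_pos R (op_shift_comb 1 (-1) a)"
  then have "\<forall>\<^sub>F n in sequentially. ?x (Suc n) \<le> ?x n"
    using sparse_not_op_pos_imp_eventually_nonpos[OF assms(1), of "op_shift_comb 1 (-1) a"]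
    by (simp add: op_seq_shift_comb[OF inf])
  moreover obtain \<Delta> where "\<And>n. int (enumerate R n) < ?x (n + \<Delta>)"
    using sparse_op_pos_imp_unbounded[OF assms] by blast
  then have "\<And>n. int n < ?x (n + \<Delta>)"
    using le_enumerate[OF inf] by (meson of_nat_le_iff order_le_less_trans)
  ultimately show False using unbounded_imp_not_eventually_nonincreasing by blast
qed

lemma sparse_op_pos_imp_jump:
  assumes "sparse R" "op_pos R a"
  obtains M :: int and E where "0 < M"
    "\<And>n. op_seq R a n < M * (op_seq R a (Suc (n + E)) - op_seq R a (n + E))"
proof -
  have inf: "infinite R" using sparse_infinite[OF assms(1)] .
  let ?x = "op_seq R a"
  obtain D where D: "\<And>n. int (enumerate R n) < ?x (Suc (n + D)) - ?x (n + D)"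
    using sparse_op_pos_imp_unbounded[OF assms(1) sparse_op_pos_imp_op_pos_difference[OF assms]]
    by (auto simp: op_seq_shift_comb[OF inf])
  define M where "M = (\<Sum>i<length a. \<bar>a ! i\<bar>)"
  define m where "m = length a - 1"
  have bound: "?x n \<le> M * int (enumerate R (n + m))" for n
    unfolding M_def m_def by (rule op_seq_le_norm_mult[OF inf])
  have "0 < M"
  proof -
    obtain n where "0 < ?x n"
      using eventually_happens[OF assms(2)[unfolded op_pos_iff_eventually[OF inf]]] by auto
    moreover have "0 \<le> M" unfolding M_def by (simp add: sum_nonneg)
    ultimately show ?thesis
      using bound[of n] by (smt (verit) mult_nonpos_nonneg of_nat_0_le_iff)
  qed
  moreover have "?x n < M * (?x (Suc (n + (m + D))) - ?x (n + (m + D)))" for n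
  proof -
    have "?x n \<le> M * int (enumerate R (n + m))" by (rule bound)
    also have "\<dots> < M * (?x (Suc (n + m + D)) - ?x (n + m + D))"
      using D[of "n + m"] \<open>0 < M\<close> by simp
    finally show ?thesis by (simp add: add.assoc)
  qed
  ultimately show thesis by (rule that)
qed

lemma sparse_op_pos_imp_eventually_ratio:
  assumes "sparse R" "op_pos R a"
  obtains r :: rat where "1 < r"
    "\<forall>\<^sub>F n in sequentially. r * of_int (op_seq R a n) < of_int (op_seq R a (Suc n))"
proof -
  have inf: "infinite R" using sparse_infinite[OF assms(1)] .
  let ?x = "op_seq R a"
  have pos: "\<forall>\<^sub>F n in sequentially. 0 < ?x n"
    using assms(2) op_pos_iff_eventually[OF inf] by simp
  obtain M :: int and E where "0 < M"
    and jump: "\<And>n. ?x n < M * (?x (Suc (n + E)) - ?x (n + E))"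
    using sparse_op_pos_imp_jump[OF assms] by blast
  define K where "K = M * 2 ^ E"
  have "0 < K" unfolding K_def using \<open>0 < M\<close> by simp
  define b where "b = op_shift_comb K (- (K + 1)) a"
  have b: "op_seq R b n = K * ?x (Suc n) - (K + 1) * ?x n" for n
    unfolding b_def op_seq_shift_comb[OF inf] by (simp add: algebra_simps)
  have "\<not> op_neg R b"
    using jump_imp_not_eventually_slow_growth[OF pos \<open>0 < M\<close> jump]
    by (simp add: op_neg_iff_eventually[OF inf] b K_def)
  then have slow: "\<forall>\<^sub>F n in sequentially. (K + 1) * ?x n \<le> K * ?x (Suc n)"
    using sparse_not_op_neg_imp_eventually_nonneg[OF assms(1), of b] by (simp add: b)
  define r where "r = rat_of_int (2 * K + 1) / rat_of_int (2 * K)"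
  have "1 < r" unfolding r_def using \<open>0 < K\<close> by simp
  moreover have "\<forall>\<^sub>F n in sequentially. r * of_int (?x n) < of_int (?x (Suc n))"
    using pos slow
  proof eventually_elim
    case (elim n)
    then have "(2 * K + 1) * ?x n < 2 * K * ?x (Suc n)" by (simp add: algebra_simps)
    then have "rat_of_int (2 * K + 1) * of_int (?x n) < of_int (2 * K) * of_int (?x (Suc n))"
      by (metis of_int_less_iff of_int_mult)
    then show ?case unfolding r_def using \<open>0 < K\<close> by (simp add: field_simps)
  qed
  ultimately show thesis by (rule that)
qed

lemma sparse_op_pos_ratio:
  assumes "sparse R" "op_pos R a"
  shows "\<exists>r::rat. r > 1 \<and>
    finite {z\<in>R. \<not> (of_int (op_apply R a (sigma R z)) > r * of_int (op_apply R a z))}"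
proof -
  have inf: "infinite R" using sparse_infinite[OF assms(1)] .
  obtain r :: rat where "1 < r"
    "\<forall>\<^sub>F n in sequentially. r * of_int (op_seq R a n) < of_int (op_seq R a (Suc n))"
    using sparse_op_pos_imp_eventually_ratio[OF assms] .
  then show ?thesis
    by (auto simp: finite_exceptions_iff_eventually_enumerate[OF inf] op_seq_def sigma_enumerate[OF inf])
qed

lemma sparse_op_pos_eventually_increasing:
  assumes "sparse R" "op_pos R a"
  shows "\<exists>N. \<forall>z\<in>R. \<forall>z'\<in>R. N \<le> z \<and> z < z' \<longrightarrow> op_apply R a z < op_apply R a z'"
proof -
  have inf: "infinite R" using sparse_infinite[OF assms(1)] .
  obtain r :: rat where "1 < r"
    and ratio: "\<forall>\<^sub>F n in sequentially. r * of_int (op_seq R a n) < of_int (op_seq R a (Suc n))"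
    using sparse_op_pos_imp_eventually_ratio[OF assms] .
  have "\<forall>\<^sub>F n in sequentially. op_seq R a n < op_seq R a (Suc n)"
    using ratio assms(2)[unfolded op_pos_iff_eventually[OF inf]]
  proof eventually_elim
    case (elim n)
    then have "rat_of_int (op_seq R a n) * 1 \<le> of_int (op_seq R a n) * r"
      using \<open>1 < r\<close> by (intro mult_left_mono) auto
    then have "rat_of_int (op_seq R a n) < of_int (op_seq R a (Suc n))"
      using elim by (metis mult.commute mult_1_right order_le_less_trans)
    then show ?case by simp
  qed
  then obtain N where N: "\<And>n n'. N \<le> n \<Longrightarrow> n < n' \<Longrightarrow> op_seq R a n < op_seq R a n'"
    using eventually_Suc_less_imp_less by blast
  show ?thesis
  proof (intro exI[of _ "enumerate R N"] ballI impI)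
    fix z z' assume "z \<in> R" "z' \<in> R" and order: "enumerate R N \<le> z \<and> z < z'"
    then obtain n n' where "z = enumerate R n" "z' = enumerate R n'"
      using enumerate_Ex[OF inf] by metis
    with order N[of n n'] inf show "op_apply R a z < op_apply R a z'"
      by (simp add: op_seq_def)
  qed
qed

lemma sparse_op_neg_ratio:
  assumes "sparse R" "op_neg R a"
  shows "\<exists>r::rat. r > 1 \<and>
    finite {z\<in>R. \<not> (of_int (op_apply R a (sigma R z)) < r * of_int (op_apply R a z))}"
  using sparse_op_pos_ratio[OF assms(1), of "map uminus a"] assms(2)
  by (simp add: op_neg_iff_op_pos_map_uminus op_apply_map_uminus)

lemma sparse_op_neg_eventually_decreasing:
  assumes "sparse R" "op_neg R a"
  shows "\<exists>N. \<forall>z\<in>R. \<forall>z'\<in>R. N \<le> z \<and> z < z' \<longrightarrow> op_apply R a z > op_apply R a z'"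
  using sparse_op_pos_eventually_increasing[OF assms(1), of "map uminus a"] assms(2)
  by (simp add: op_neg_iff_op_pos_map_uminus op_apply_map_uminus)

theorem mainTheorem5:
  fixes R :: "nat set" and a :: "int list"
  assumes "infinite R" and "sparse R"
  shows "(op_pos R a \<longrightarrow>
            (\<exists>r::rat. r > 1 \<and>
               finite {z\<in>R. \<not> (of_int (op_apply R a (sigma R z)) > r * of_int (op_apply R a z))}))
       \<and> (op_neg R a \<longrightarrow>
            (\<exists>r::rat. r > 1 \<and>
               finite {z\<in>R. \<not> (of_int (op_apply R a (sigma R z)) < r * of_int (op_apply R a z))}))
       \<and> (op_pos R a \<longrightarrow>
            (\<exists>N. \<forall>z\<in>R. \<forall>z'\<in>R. N \<le> z \<and> z < z' \<longrightarrow> op_apply R a z < op_apply R a z'))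
       \<and> (op_neg R a \<longrightarrow>
            (\<exists>N. \<forall>z\<in>R. \<forall>z'\<in>R. N \<le> z \<and> z < z' \<longrightarrow> op_apply R a z > op_apply R a z'))"
  using sparse_op_pos_ratio sparse_op_neg_ratio
    sparse_op_pos_eventually_increasing sparse_op_neg_eventually_decreasing \<open>sparse R\<close>
  by simp

end
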